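(* Let $S$ be a numerical semigroup with minimal generators $e<a_1<\dots<a_t$, blowup $B$ and generating tuple $\mathcal D=(e,d_1,\dots,d_t)$, $d_i=a_i-e$. Fix $0\le i<e$ and write ${\rm adj}(S_i)=\{u_0<u_1<u_2<\cdots\}$. Then for every $u\in{\rm adj}(S_i)$ there exists $s\in S_i$ with ${\rm d}_{\max}(s;S)=|\mathcal R(u)|$.
   Context: A numerical semigroup is a submonoid of $(\mathbb N,+)$ with finite complement in $\mathbb N$. Its minimal generators are $e<a_1<\dots<a_t$, and $e$ is called the multiplicity. An $S$-factorization of $n\in S$ is a tuple $(c_0,\dots,c_t)\in\mathbb N^{t+1}$ with $c_0e+\sum_{i\ge1}c_ia_i=n$; its length is $\sum c_i$. ${\rm ord}(n;S)$ is the maximum length of an $S$-factorization of $n$, and ${\rm d}_{\max}(n;S)$ is the number of $S$-factorizations of $n$ of length ${\rm ord}(n;S)$. The blowup of $S$ is $B=\langle e,d_1,\dots,d_t\rangle$ with $d_i=a_i-e$. A $B^{\mathcal D}$-factorization of $b\in B$ is a tuple $(x_0,\dots,x_t)\in\mathbb N^{t+1}$ with $x_0e+\sum_{i\ge1}x_id_i=b$, and its length is $\sum x_i$. The minimum such length is denoted $\min{\rm ord}(b;B^{\mathcal D})$, and $\mathcal P(b)$ denotes the set of all $B^{\mathcal D}$-factorizations of $b$. The adjustment of $s\in S$ is ${\rm adj}(s)=s-{\rm ord}(s;S)e$, and ${\rm adj}(U)=\{{\rm adj}(s):s\in U\}$. We write $S_i=\{s\in S: s\equiv i \pmod e\}$.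 The sets $\mathcal R(u_j)$ are defined recursively by $\mathcal R(u_0)=\mathcal P(u_0)$ and, for $j>0$, $\mathcal R(u_j)=\{\mathbf x\in\mathcal P(u_j): |\mathbf x|<\min{\rm ord}(u_{j-1};B^{\mathcal D})-\frac{u_j-u_{j-1}}{e}\}$. *)

theory Defs
  imports Complex_Main
begin

definition numerical_semigroup :: "nat set \<Rightarrow> bool" where
  "numerical_semigroup S \<longleftrightarrow> 0 \<in> S \<and> (\<forall>x\<in>S. \<forall>y\<in>S. x + y \<in> S) \<and> finite (UNIV - S)"

definition minimal_generators :: "nat set \<Rightarrow> nat set" where
  "minimal_generators S = {x \<in> S. x \<noteq> 0 \<and> \<not> (\<exists>y\<in>S. \<exists>z\<in>S. y \<noteq> 0 \<and> z \<noteq> 0 \<and> x = y + z)}"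

text \<open>Factorizations of n with respect to a generating tuple gs (as a list):
  tuples c of the same length with sum c_i * gs_i = n. The length of c is sum_list c.\<close>
definition factorizations :: "nat list \<Rightarrow> nat \<Rightarrow> nat list set" where
  "factorizations gs n = {c. length c = length gs \<and> (\<Sum>i<length gs. c ! i * gs ! i) = n}"

definition ord_S :: "nat list \<Rightarrow> nat \<Rightarrow> nat" where
  "ord_S gs n = Max (sum_list ` factorizations gs n)"

definition dmax :: "nat list \<Rightarrow> nat \<Rightarrow> nat" where
  "dmax gs n = card {c \<in> factorizations gs n. sum_list c = ord_S gs n}"

definition blowup_gens :: "nat list \<Rightarrow> nat list" where
  "blowup_gens gs = hd gs # map (\<lambda>a. a - hd gs) (tl gs)"

definition minord :: "nat list \<Rightarrow> nat \<Rightarrow> nat" where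
  "minord D b = Min (sum_list ` factorizations D b)"

definition adj :: "nat list \<Rightarrow> nat \<Rightarrow> nat" where
  "adj gs s = s - ord_S gs s * hd gs"

definition residue_class :: "nat set \<Rightarrow> nat \<Rightarrow> nat \<Rightarrow> nat set" where
  "residue_class S e i = {s \<in> S. s mod e = i}"

definition pred_in :: "nat set \<Rightarrow> nat \<Rightarrow> nat" where
  "pred_in A u = Max {v \<in> A. v < u}"

definition R_set :: "nat list \<Rightarrow> nat set \<Rightarrow> nat \<Rightarrow> nat list set" where
  "R_set gs A u =
     (if \<not> (\<exists>v\<in>A. v < u) then factorizations (blowup_gens gs) u
      else {x \<in> factorizations (blowup_gens gs) u.
              real (sum_list x) < real (minord (blowup_gens gs) (pred_in A u))
                                   - (real u - real (pred_in A u)) / real (hd gs)})"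

end

theory Submission
  imports Defs
begin

text \<open>Write each generator as \<open>a\<^sub>k = d\<^sub>k + e\<close>. Then an \<open>S\<close>-factorization \<open>(c\<^sub>0, y)\<close> of
  \<open>s\<close> of length \<open>\<ell>\<close> is the same as a \<open>D\<close>-factorization \<open>(0, y)\<close> of \<open>s - \<ell> e\<close> with
  \<open>|y| \<le> \<ell>\<close>. Call \<open>w + e\<cdot>min ord(w)\<close> the lift of \<open>w\<close>. Any \<open>D\<close>-factorization
  \<open>(x\<^sub>0, y)\<close> of an element \<open>z \<equiv> i\<close> yields, through \<open>s' = \<Sum> y\<^sub>k a\<^sub>k \<in> S\<^sub>i\<close>, an element
  \<open>w = adj(s')\<close> with \<open>w \<le> z - x\<^sub>0 e\<close> and lift at most \<open>z + (|y| - x\<^sub>0) e\<close>; in particular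
  lifts decrease along \<open>adj(S\<^sub>i)\<close>.

  Now let \<open>u = adj(s\<^sub>0)\<close> and \<open>L \<ge> ord(s\<^sub>0)\<close> be such that every element of \<open>adj(S\<^sub>i)\<close>
  below \<open>u\<close> has lift at least \<open>u + (L + 1) e\<close>. Then \<open>u + L e\<close> has order \<open>L\<close>, and its
  factorizations of maximal length correspond to the \<open>D\<close>-factorizations of \<open>u\<close> of length
  at most \<open>L\<close>, all of which have \<open>x\<^sub>0 = 0\<close>. For \<open>u = u\<^sub>0\<close> any large \<open>L\<close> works and gives
  all of \<open>P(u\<^sub>0)\<close>; for \<open>u = u\<^sub>j\<close> the choice
  \<open>L = min ord(u\<^sub>j\<^sub>-\<^sub>1) - (u\<^sub>j - u\<^sub>j\<^sub>-\<^sub>1)/e - 1\<close> gives exactly \<open>R(u\<^sub>j)\<close>.\<close>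

definition lincomb :: "nat list \<Rightarrow> nat list \<Rightarrow> nat" where
  "lincomb c g = (\<Sum>k<length g. c ! k * g ! k)"

lemma lincomb_Cons: "lincomb (c # cs) (g # gs) = c * g + lincomb cs gs"
  unfolding lincomb_def length_Cons sum.lessThan_Suc_shift by simp

lemma factorizations_lincomb: "factorizations g n = {c. length c = length g \<and> lincomb c g = n}"
  unfolding factorizations_def lincomb_def by simp

lemma factorizations_Cons:
  "c \<in> factorizations (g # gs) n \<longleftrightarrow>
     (\<exists>c0 y. c = c0 # y \<and> length y = length gs \<and> c0 * g + lincomb y gs = n)"
  unfolding factorizations_lincomb by (auto simp: length_Suc_conv lincomb_Cons)

lemma lincomb_map_diff:
  assumes "\<forall>a\<in>set as. e \<le> a" and "length y = length as"
  shows "lincomb y as = lincomb y (map (\<lambda>a. a - e) as) + sum_list y * e"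
proof -
  have "lincomb y as = (\<Sum>k<length as. y ! k * (as ! k - e) + y ! k * e)"
    unfolding lincomb_def
    by (rule sum.cong) (use assms(1) in \<open>auto simp: diff_mult_distrib2\<close>)
  also have "\<dots> = lincomb y (map (\<lambda>a. a - e) as) + (\<Sum>k<length as. y ! k) * e"
    unfolding lincomb_def by (simp add: sum.distrib sum_distrib_right)
  finally show ?thesis
    using assms(2) by (simp add: sum_list_sum_nth atLeast0LessThan)
qed

lemma finite_factorizations:
  assumes "\<forall>x\<in>set g. 0 < x"
  shows "finite (factorizations g n)"
proof (rule finite_subset)
  show "factorizations g n \<subseteq> {c. set c \<subseteq> {..n} \<and> length c = length g}"
  proof (rule subsetI, unfold mem_Collect_eq, rule conjI)
    fix c assume c: "c \<in> factorizations g n"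
    then show "length c = length g" by (simp add: factorizations_lincomb)
    show "set c \<subseteq> {..n}"
    proof
      fix x assume "x \<in> set c"
      then obtain k where k: "k < length g" "x = c ! k"
        using c by (auto simp: factorizations_lincomb in_set_conv_nth)
      have "0 < g ! k" using assms k(1) by simp
      then have "c ! k \<le> c ! k * g ! k" by simp
      also have "\<dots> \<le> lincomb c g"
        unfolding lincomb_def by (rule member_le_sum) (use k in auto)
      finally show "x \<in> {..n}" using c k by (simp add: factorizations_lincomb)
    qed
  qed
qed (rule finite_lists_length_eq, simp)

lemma lincomb_mem:
  assumes "numerical_semigroup S" and "set g \<subseteq> S"
  shows "lincomb c g \<in> S"
proof -
  have add: "x \<in> S \<Longrightarrow> y \<in> S \<Longrightarrow> x + y \<in> S" and zero: "0 \<in> S" for x y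
    using assms(1) by (auto simp: numerical_semigroup_def)
  have mult: "x \<in> S \<Longrightarrow> k * x \<in> S" for k x
    by (induction k) (auto intro: zero add)
  have sum: "finite I \<Longrightarrow> (\<And>k. k \<in> I \<Longrightarrow> f k \<in> S) \<Longrightarrow> sum f I \<in> S"
    for I and f :: "nat \<Rightarrow> nat"
    by (induction I rule: finite_induct) (auto intro: zero add)
  show ?thesis
    unfolding lincomb_def
    by (rule sum) (use assms(2) in \<open>auto simp: mult.commute intro!: mult\<close>)
qed

lemma factorizations_nonempty:
  assumes S: "numerical_semigroup S" and g: "set g = minimal_generators S" and "s \<in> S"
  shows "factorizations g s \<noteq> {}"
  using \<open>s \<in> S\<close>
proof (induction s rule: less_induct)
  case (less s)
  show ?case
  proof (cases "s \<in> minimal_generators S")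
    case True
    then obtain j where j: "j < length g" "s = g ! j"
      using g by (metis in_set_conv_nth)
    have "lincomb ((replicate (length g) 0)[j := 1]) g = (\<Sum>k<length g. if k = j then g ! k else 0)"
      unfolding lincomb_def by (rule sum.cong) (auto simp: nth_list_update)
    also have "\<dots> = s" using j by simp
    finally have "(replicate (length g) 0)[j := 1] \<in> factorizations g s"
      by (simp add: factorizations_lincomb)
    then show ?thesis by blast
  next
    case False
    show ?thesis
    proof (cases "s = 0")
      case True
      have "replicate (length g) 0 \<in> factorizations g 0"
        by (simp add: factorizations_lincomb lincomb_def)
      then show ?thesis using True by blast
    next
      case False
      with \<open>s \<notin> minimal_generators S\<close> less.prems obtain y z
        where yz: "y \<in> S" "z \<in> S" "y \<noteq> 0" "z \<noteq> 0" "s = y + z"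
        by (auto simp: minimal_generators_def)
      obtain c1 c2 where c: "c1 \<in> factorizations g y" "c2 \<in> factorizations g z"
        using less.IH yz by fastforce
      let ?c = "map (\<lambda>k. c1 ! k + c2 ! k) [0..<length g]"
      have "lincomb ?c g = lincomb c1 g + lincomb c2 g"
        unfolding lincomb_def by (simp add: algebra_simps sum.distrib)
      then have "?c \<in> factorizations g s"
        using c yz(5) by (simp add: factorizations_lincomb)
      then show ?thesis by blast
    qed
  qed
qed

lemma ord_S_ge:
  assumes "\<forall>x\<in>set g. 0 < x" and "c \<in> factorizations g n"
  shows "sum_list c \<le> ord_S g n"
  unfolding ord_S_def using assms by (simp add: finite_factorizations)

lemma ord_S_attained:
  assumes "\<forall>x\<in>set g. 0 < x" and "factorizations g n \<noteq> {}"
  obtains c where "c \<in> factorizations g n" and "sum_list c = ord_S g n"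
proof -
  have "ord_S g n \<in> sum_list ` factorizations g n"
    unfolding ord_S_def using assms by (simp add: finite_factorizations)
  then show ?thesis by (auto intro: that)
qed

lemma minord_le:
  assumes "\<forall>x\<in>set g. 0 < x" and "c \<in> factorizations g n"
  shows "minord g n \<le> sum_list c"
  unfolding minord_def using assms by (simp add: finite_factorizations)

lemma minord_attained:
  assumes "\<forall>x\<in>set g. 0 < x" and "factorizations g n \<noteq> {}"
  obtains c where "c \<in> factorizations g n" and "sum_list c = minord g n"
proof -
  have "minord g n \<in> sum_list ` factorizations g n"
    unfolding minord_def using assms by (simp add: finite_factorizations)
  then show ?thesis by (auto intro: that)
qed

lemma pred_in_greatest:
  fixes A :: "nat set"
  assumes "\<exists>v\<in>A. v < u"
  shows "pred_in A u \<in> A" and "pred_in A u < u" and "\<And>w. w \<in> A \<Longrightarrow> w < u \<Longrightarrow> w \<le> pred_in A u"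
proof -
  have fin: "finite {v \<in> A. v < u}" by (rule finite_subset[of _ "{..<u}"]) auto
  have "pred_in A u \<in> {v \<in> A. v < u}"
    unfolding pred_in_def by (rule Max_in[OF fin]) (use assms in auto)
  then show "pred_in A u \<in> A" and "pred_in A u < u" by auto
  show "w \<le> pred_in A u" if "w \<in> A" and "w < u" for w
    unfolding pred_in_def by (rule Max_ge[OF fin]) (use that in auto)
qed

locale blowup_residue =
  fixes S :: "nat set" and e :: nat and as :: "nat list" and i :: nat
  assumes numerical: "numerical_semigroup S"
    and sorted_gens: "sorted_wrt (<) (e # as)"
    and minimal_gens: "set (e # as) = minimal_generators S"
begin

abbreviation "ds \<equiv> map (\<lambda>a. a - e) as"
abbreviation "ord s \<equiv> ord_S (e # as) s"
abbreviation "P z \<equiv> factorizations (blowup_gens (e # as)) z"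
abbreviation "mord z \<equiv> minord (blowup_gens (e # as)) z"
abbreviation "adjS \<equiv> adj (e # as) ` residue_class S e i"

definition lift :: "nat \<Rightarrow> nat" where
  "lift w = w + mord w * e"

lemma multiplicity_pos: "0 < e"
  using minimal_gens by (auto simp: minimal_generators_def)

lemma gens_pos: "\<forall>x\<in>set (e # as). 0 < x"
  using multiplicity_pos sorted_gens by fastforce

lemma blowup_gens_pos: "\<forall>x\<in>set (blowup_gens (e # as)). 0 < x"
  using multiplicity_pos sorted_gens by (auto simp: blowup_gens_def)

lemma gens_subset: "set (e # as) \<subseteq> S"
  using minimal_gens by (auto simp: minimal_generators_def)

lemma S_factorizations_iff:
  "c \<in> factorizations (e # as) s \<longleftrightarrow>
     (\<exists>c0 y. c = c0 # y \<and> length y = length as \<and> lincomb y ds + sum_list c * e = s)"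
proof -
  have "lincomb y as = lincomb y ds + sum_list y * e" if "length y = length as" for y
    using sorted_gens that by (intro lincomb_map_diff) auto
  then show ?thesis
    unfolding factorizations_Cons by (auto simp: algebra_simps)
qed

lemma B_factorizations_iff:
  "x \<in> P z \<longleftrightarrow> (\<exists>x0 y. x = x0 # y \<and> length y = length as \<and> x0 * e + lincomb y ds = z)"
  unfolding blowup_gens_def factorizations_Cons by simp

lemma ord_ge: "c \<in> factorizations (e # as) s \<Longrightarrow> sum_list c \<le> ord s"
  using gens_pos by (rule ord_S_ge)

lemma mord_le: "x \<in> P z \<Longrightarrow> mord z \<le> sum_list x"
  using blowup_gens_pos by (rule minord_le)

lemma adj_factorization:
  assumes "s \<in> S"
  obtains y where "length y = length as" and "lincomb y ds + ord s * e = s"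
    and "sum_list y \<le> ord s"
proof -
  obtain c where "c \<in> factorizations (e # as) s" and "sum_list c = ord s"
    using ord_S_attained gens_pos factorizations_nonempty[OF numerical minimal_gens assms]
    by metis
  then show ?thesis
    using that by (auto simp: S_factorizations_iff)
qed

lemma adj_add_ord: "s \<in> S \<Longrightarrow> adj (e # as) s + ord s * e = s"
  by (rule adj_factorization) (auto simp: adj_def)

lemma adj_blowup_factorization:
  assumes "s \<in> S"
  obtains x where "x \<in> P (adj (e # as) s)" and "sum_list x \<le> ord s"
proof (rule adj_factorization[OF assms])
  fix y assume "length y = length as" "lincomb y ds + ord s * e = s" "sum_list y \<le> ord s"
  then show ?thesis
    using that[of "0 # y"] by (auto simp: B_factorizations_iff adj_def)
qed

lemma mord_le_ord_adj:
  assumes "s \<in> S"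
  shows "mord (adj (e # as) s) \<le> ord s"
proof (rule adj_blowup_factorization[OF assms])
  fix x assume x: "x \<in> P (adj (e # as) s)" "sum_list x \<le> ord s"
  show ?thesis using mord_le[OF x(1)] x(2) by linarith
qed

lemma lift_adj_le:
  assumes "s \<in> S"
  shows "lift (adj (e # as) s) \<le> s"
proof -
  have "mord (adj (e # as) s) \<le> ord s" using assms by (rule mord_le_ord_adj)
  then show ?thesis
    using adj_add_ord[OF assms] unfolding lift_def by (metis add_le_cancel_left mult_le_mono1)
qed

lemma adjS_mod:
  assumes "w \<in> adjS"
  shows "w mod e = i"
proof -
  obtain s where s: "s \<in> S" "s mod e = i" and w: "w = adj (e # as) s"
    using assms by (auto simp: residue_class_def)
  have "w mod e = (w + ord s * e) mod e" by simp
  then show ?thesis using adj_add_ord[OF s(1)] s(2) w by simp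
qed

lemma adjS_below_factorization:
  assumes z: "z mod e = i" and y: "length y = length as" and x: "x0 * e + lincomb y ds = z"
  obtains w where "w \<in> adjS" and "w + x0 * e \<le> z" and "lift w + x0 * e \<le> z + sum_list y * e"
proof -
  define s' where "s' = lincomb y as"
  have s'S: "s' \<in> S"
    unfolding s'_def by (intro lincomb_mem numerical) (use gens_subset in auto)
  have fact: "0 # y \<in> factorizations (e # as) s'"
    using y by (simp add: factorizations_lincomb lincomb_Cons s'_def)
  then have s': "lincomb y ds + sum_list y * e = s'"
    by (auto simp: S_factorizations_iff)
  have "sum_list y * e \<le> ord s' * e"
    using ord_ge[OF fact] by simp
  moreover have w: "adj (e # as) s' + ord s' * e = s'" and "lift (adj (e # as) s') \<le> s'"
    using s'S by (rule adj_add_ord, rule lift_adj_le)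
  moreover have "s' mod e = i"
  proof -
    have "s' mod e = (s' + x0 * e) mod e" by simp
    also have "s' + x0 * e = z + sum_list y * e" using s' x by linarith
    also have "(z + sum_list y * e) mod e = z mod e" by simp
    finally show ?thesis using z by simp
  qed
  then have "adj (e # as) s' \<in> adjS"
    using s'S by (auto simp: residue_class_def)
  ultimately show ?thesis
    using s' x by (intro that[of "adj (e # as) s'"]) linarith+
qed

lemma adjS_blowup_factorizations_nonempty:
  assumes "w \<in> adjS"
  shows "P w \<noteq> {}"
proof -
  obtain s where "s \<in> S" and "w = adj (e # as) s"
    using assms by (auto simp: residue_class_def)
  then show ?thesis using adj_blowup_factorization by blast
qed

text \<open>Otherwise \<open>x\<close> would extend to an \<open>S\<close>-factorization of \<open>s\<close> of length \<open>ord s + k + x\<^sub>0\<close>.\<close>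
lemma ord_add_less_blowup_factorization:
  assumes s: "s \<in> S" and z: "z + k * e = adj (e # as) s" and k: "0 < k" and x: "x \<in> P z"
  shows "ord s + k < sum_list x"
proof -
  obtain x0 y where x: "x = x0 # y" "length y = length as" "x0 * e + lincomb y ds = z"
    using x by (auto simp: B_factorizations_iff)
  have "ord s + k + x0 < sum_list y"
  proof (rule ccontr)
    assume "\<not> ?thesis"
    then have len: "sum_list ((ord s + k + x0 - sum_list y) # y) = ord s + k + x0" by simp
    have "lincomb y ds + (ord s + k + x0) * e = s"
      using adj_add_ord[OF s] z x(3) unfolding add_mult_distrib by linarith
    then have "(ord s + k + x0 - sum_list y) # y \<in> factorizations (e # as) s"
      using x(2) len by (auto simp: S_factorizations_iff)
    from ord_ge[OF this] len k show False by simp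
  qed
  then show ?thesis using x(1) by simp
qed

lemma ord_add_less_mord:
  assumes "s \<in> S" and "z + k * e = adj (e # as) s" and "0 < k" and "P z \<noteq> {}"
  shows "ord s + k < mord z"
proof -
  obtain x where x: "x \<in> P z" and "sum_list x = mord z"
    using minord_attained[OF blowup_gens_pos assms(4)] .
  then show ?thesis
    using ord_add_less_blowup_factorization[OF assms(1-3) x] by simp
qed

lemma lift_antimono:
  assumes v: "v \<in> adjS" and w: "w \<in> adjS" and "w \<le> v"
  shows "lift v \<le> lift w"
proof (cases "w = v")
  case False
  obtain k where vk: "v = w + e * k"
    using mod_eq_nat2E[of w e v] adjS_mod[OF v] adjS_mod[OF w] \<open>w \<le> v\<close> by auto
  then have "0 < k" using False by simp
  obtain s where s: "s \<in> S" and vs: "v = adj (e # as) s"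
    using v by (auto simp: residue_class_def)
  have "ord s + k < mord w"
    using ord_add_less_mord[OF s _ \<open>0 < k\<close> adjS_blowup_factorizations_nonempty[OF w]] vk vs
    by (simp add: mult.commute)
  moreover have "mord v \<le> ord s"
    using mord_le_ord_adj[OF s] vs by simp
  ultimately have "mord v + k \<le> mord w" by simp
  then have "mord v * e + k * e \<le> mord w * e"
    by (metis add_mult_distrib mult_le_mono1)
  then show ?thesis
    unfolding lift_def using vk by (simp add: mult.commute)
qed simp

definition lift_gap :: "nat \<Rightarrow> nat \<Rightarrow> bool" where
  "lift_gap u L \<longleftrightarrow> (\<forall>w\<in>adjS. w < u \<longrightarrow> u + Suc L * e \<le> lift w)"

lemma S_factorization_length_le:
  assumes u: "u mod e = i" and gap: "lift_gap u L"
    and c: "c \<in> factorizations (e # as) (u + L * e)"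
  shows "sum_list c \<le> L"
proof (rule ccontr)
  assume "\<not> ?thesis"
  then obtain k where k: "sum_list c = L + k" "0 < k"
    by (metis less_imp_add_positive not_le)
  obtain c0 y where y: "c = c0 # y" "length y = length as" "lincomb y ds + sum_list c * e = u + L * e"
    using c by (auto simp: S_factorizations_iff)
  have z: "lincomb y ds + k * e = u"
    using y(3) k(1) by (simp add: add_mult_distrib)
  then have "lincomb y ds mod e = i"
    using u by (metis mod_mult_self1)
  then obtain w where w: "w \<in> adjS" "w \<le> lincomb y ds" "lift w \<le> lincomb y ds + sum_list y * e"
    using adjS_below_factorization[of "lincomb y ds" y 0] y(2) by auto
  have "0 < k * e" using k(2) multiplicity_pos by simp
  then have "w < u" using w(2) z by linarith
  then have "u + Suc L * e \<le> lift w" using gap w(1) unfolding lift_gap_def by blast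
  then have "(Suc L + k) * e \<le> sum_list y * e"
    using w(3) z by (simp add: add_mult_distrib)
  then have "Suc L + k \<le> sum_list y"
    using multiplicity_pos mult_le_cancel2 by blast
  then show False using k(1) y(1) by simp
qed

lemma blowup_factorization_head_zero:
  assumes u: "u mod e = i" and gap: "lift_gap u L"
    and x: "x0 # y \<in> P u" and short: "x0 + sum_list y \<le> L"
  shows "x0 = 0"
proof (rule ccontr)
  assume "x0 \<noteq> 0"
  have y: "length y = length as" "x0 * e + lincomb y ds = u"
    using x by (auto simp: B_factorizations_iff)
  then obtain w where w: "w \<in> adjS" "w + x0 * e \<le> u" "lift w + x0 * e \<le> u + sum_list y * e"
    using adjS_below_factorization[OF u] by blast
  have "0 < x0 * e" using \<open>x0 \<noteq> 0\<close> multiplicity_pos by simp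
  then have "w < u" using w(2) by linarith
  then have "u + Suc L * e \<le> lift w" using gap w(1) unfolding lift_gap_def by blast
  then have "(Suc L + x0) * e \<le> sum_list y * e"
    using w(3) by (simp add: add_mult_distrib)
  then have "Suc L + x0 \<le> sum_list y"
    using multiplicity_pos mult_le_cancel2 by blast
  then show False using short by simp
qed

lemma ord_adj_add:
  assumes s0: "s0 \<in> residue_class S e i" and L: "ord s0 \<le> L"
    and gap: "lift_gap (adj (e # as) s0) L"
  shows "adj (e # as) s0 + L * e \<in> residue_class S e i" and "ord (adj (e # as) s0 + L * e) = L"
proof -
  let ?u = "adj (e # as) s0"
  have s0S: "s0 \<in> S" using s0 by (simp add: residue_class_def)
  have u: "?u mod e = i" using s0 by (intro adjS_mod) blast
  obtain y where y: "length y = length as" "lincomb y ds + ord s0 * e = s0" "sum_list y \<le> ord s0"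
    using adj_factorization[OF s0S] .
  have "lincomb y ds = ?u" using y(2) by (simp add: adj_def)
  moreover have len: "sum_list ((L - sum_list y) # y) = L" using y(3) L by simp
  ultimately have c: "(L - sum_list y) # y \<in> factorizations (e # as) (?u + L * e)"
    unfolding S_factorizations_iff using y(1) by simp
  then have "?u + L * e = lincomb ((L - sum_list y) # y) (e # as)"
    by (simp add: factorizations_lincomb)
  also have "\<dots> \<in> S"
    using numerical gens_subset by (rule lincomb_mem)
  finally have "?u + L * e \<in> S" .
  then show "?u + L * e \<in> residue_class S e i"
    using u by (simp add: residue_class_def)
  obtain c' where c': "c' \<in> factorizations (e # as) (?u + L * e)" "sum_list c' = ord (?u + L * e)"
    using ord_S_attained[OF gens_pos] c by blast
  then have "ord (?u + L * e) \<le> L"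
    using S_factorization_length_le[OF u gap c'(1)] by simp
  moreover have "L \<le> ord (?u + L * e)"
    using ord_ge[OF c] len by simp
  ultimately show "ord (?u + L * e) = L" by simp
qed

text \<open>The maximal factorizations \<open>(L - |y|) # y\<close> of \<open>u + L e\<close> correspond to the
  bounded factorizations \<open>0 # y\<close> of \<open>u\<close>.\<close>
lemma dmax_adj_add:
  assumes s0: "s0 \<in> residue_class S e i" and L: "ord s0 \<le> L"
    and gap: "lift_gap (adj (e # as) s0) L"
  shows "dmax (e # as) (adj (e # as) s0 + L * e) = card {x \<in> P (adj (e # as) s0). sum_list x \<le> L}"
proof -
  let ?u = "adj (e # as) s0"
  define Y where "Y = {y. length y = length as \<and> lincomb y ds = ?u \<and> sum_list y \<le> L}"
  have u: "?u mod e = i" using s0 by (intro adjS_mod) blast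
  have "{c \<in> factorizations (e # as) (?u + L * e). sum_list c = ord (?u + L * e)}
      = (\<lambda>y. (L - sum_list y) # y) ` Y"
  proof (intro equalityI subsetI)
    fix c assume "c \<in> {c \<in> factorizations (e # as) (?u + L * e). sum_list c = ord (?u + L * e)}"
    then obtain c0 y where "c = c0 # y" "length y = length as" "lincomb y ds + L * e = ?u + L * e"
      "c0 + sum_list y = L"
      using ord_adj_add(2)[OF assms] by (auto simp: S_factorizations_iff)
    then show "c \<in> (\<lambda>y. (L - sum_list y) # y) ` Y"
      unfolding Y_def by force
  next
    fix c assume "c \<in> (\<lambda>y. (L - sum_list y) # y) ` Y"
    then show "c \<in> {c \<in> factorizations (e # as) (?u + L * e). sum_list c = ord (?u + L * e)}"
      using ord_adj_add(2)[OF assms] unfolding Y_def by (auto simp: S_factorizations_iff)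
  qed
  moreover have "{x \<in> P ?u. sum_list x \<le> L} = Cons 0 ` Y"
  proof (intro equalityI subsetI)
    fix x assume "x \<in> {x \<in> P ?u. sum_list x \<le> L}"
    then obtain x0 y where "x = x0 # y" "x0 # y \<in> P ?u" "x0 + sum_list y \<le> L"
      by (auto simp: B_factorizations_iff)
    moreover from this have "x0 = 0"
      using blowup_factorization_head_zero[OF u gap] by blast
    ultimately show "x \<in> Cons 0 ` Y"
      unfolding Y_def by (auto simp: B_factorizations_iff)
  next
    fix x assume "x \<in> Cons 0 ` Y"
    then show "x \<in> {x \<in> P ?u. sum_list x \<le> L}"
      unfolding Y_def by (auto simp: B_factorizations_iff)
  qed
  ultimately show ?thesis
    unfolding dmax_def by (simp add: card_image inj_on_def)
qed

lemma R_set_least_eq_bounded: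
  assumes s0: "s0 \<in> residue_class S e i" and least: "\<not> (\<exists>v\<in>adjS. v < adj (e # as) s0)"
  obtains L where "ord s0 \<le> L" and "lift_gap (adj (e # as) s0) L"
    and "R_set (e # as) adjS (adj (e # as) s0) = {x \<in> P (adj (e # as) s0). sum_list x \<le> L}"
proof
  let ?u = "adj (e # as) s0"
  define L where "L = max (ord s0) (Max (sum_list ` P ?u))"
  show "ord s0 \<le> L" unfolding L_def by simp
  show "lift_gap ?u L" using least by (auto simp: lift_gap_def)
  have "sum_list x \<le> L" if "x \<in> P ?u" for x
    unfolding L_def using that finite_factorizations[OF blowup_gens_pos]
    by (simp add: le_max_iff_disj)
  then show "R_set (e # as) adjS ?u = {x \<in> P ?u. sum_list x \<le> L}"
    using least unfolding R_set_def by auto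
qed

lemma R_set_pred_in_eq_bounded:
  assumes s0: "s0 \<in> residue_class S e i" and below: "\<exists>v\<in>adjS. v < adj (e # as) s0"
  obtains L where "ord s0 \<le> L" and "lift_gap (adj (e # as) s0) L"
    and "R_set (e # as) adjS (adj (e # as) s0) = {x \<in> P (adj (e # as) s0). sum_list x \<le> L}"
proof -
  let ?u = "adj (e # as) s0"
  define v where "v = pred_in adjS ?u"
  have v: "v \<in> adjS" "v < ?u" and v_max: "\<And>w. w \<in> adjS \<Longrightarrow> w < ?u \<Longrightarrow> w \<le> v"
    unfolding v_def using pred_in_greatest[OF below] by auto
  have u: "?u \<in> adjS" using s0 by blast
  obtain k where uk: "?u = v + e * k"
    using mod_eq_nat2E[of v e ?u] adjS_mod[OF v(1)] adjS_mod[OF u] v(2) by auto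
  with v(2) have "0 < k" by (cases k) auto
  have s0S: "s0 \<in> S" using s0 by (simp add: residue_class_def)
  have k_less: "ord s0 + k < mord v"
    using ord_add_less_mord[OF s0S _ \<open>0 < k\<close> adjS_blowup_factorizations_nonempty[OF v(1)]] uk
    by (simp add: mult.commute)
  define L where "L = mord v - k - 1"
  have "k + Suc L = mord v" unfolding L_def using k_less by simp
  then have "lift v = v + (k + Suc L) * e" by (simp add: lift_def)
  also have "\<dots> = ?u + Suc L * e" using uk by (simp add: algebra_simps)
  finally have lift_v: "lift v = ?u + Suc L * e" .
  show ?thesis
  proof
    show "ord s0 \<le> L" unfolding L_def using k_less by simp
    show "lift_gap ?u L"
      unfolding lift_gap_def
    proof (intro ballI impI)
      fix w assume "w \<in> adjS" and "w < ?u"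
      then show "?u + Suc L * e \<le> lift w"
        using lift_antimono[OF v(1)] v_max lift_v by simp
    qed
    have "real ?u - real v = real k * real e" using uk by simp
    then have "(real ?u - real v) / real e = real k" using multiplicity_pos by simp
    moreover have "real (sum_list x) < real (mord v) - real k \<longleftrightarrow> sum_list x \<le> L" for x
      unfolding L_def using k_less by linarith
    ultimately show "R_set (e # as) adjS ?u = {x \<in> P ?u. sum_list x \<le> L}"
      using below unfolding R_set_def v_def by simp
  qed
qed

end

theorem theorem3p9:
  fixes S :: "nat set" and e :: nat and as :: "nat list" and i :: nat
  assumes "numerical_semigroup S"
    and "sorted_wrt (<) (e # as)"
    and "set (e # as) = minimal_generators S"
    and "i < e"
  shows "\<forall>u \<in> adj (e # as) ` residue_class S e i.
           \<exists>s \<in> residue_class S e i.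
             dmax (e # as) s = card (R_set (e # as) (adj (e # as) ` residue_class S e i) u)"
proof
  interpret blowup_residue S e as i
    using assms(1-3) by unfold_locales
  fix u assume "u \<in> adjS"
  then obtain s0 where s0: "s0 \<in> residue_class S e i" and u: "u = adj (e # as) s0" by blast
  obtain L where L: "ord s0 \<le> L" and gap: "lift_gap u L"
    and R: "R_set (e # as) adjS u = {x \<in> P u. sum_list x \<le> L}"
  proof (cases "\<exists>v\<in>adjS. v < u")
    case True
    show ?thesis using that by (rule R_set_pred_in_eq_bounded[OF s0 True[unfolded u], folded u])
  next
    case False
    show ?thesis using that by (rule R_set_least_eq_bounded[OF s0 False[unfolded u], folded u])
  qed
  show "\<exists>s \<in> residue_class S e i. dmax (e # as) s = card (R_set (e # as) adjS u)"
  proof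
    show "u + L * e \<in> residue_class S e i"
      using ord_adj_add(1)[OF s0 L gap[unfolded u]] u by simp
    show "dmax (e # as) (u + L * e) = card (R_set (e # as) adjS u)"
      using dmax_adj_add[OF s0 L gap[unfolded u]] R u by simp
  qed
qed

end
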